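(* Let $p$ be a prime and $k,\ell$ integers with $k>0$, $\ell\ge0$; put $q=p^k$ and $Q=p^{\ell}$. Let $c\in\mathbb{F}_{q^3}$ and define \[ f(X)=(X^q-X)^3+c^{q^2}X^{q^2Q}+c^qX^{qQ}+cX^{Q}, \] i.e. $f(X)=X^3\circ(X^q-X)+(X^{q^2}+X^q+X)\circ cX^Q$. Then $f(X)$ permutes $\mathbb{F}_{q^3}$ if and only if $q\equiv 2\pmod 3$ and $c^{q^2}+c^q+c\ne 0$.
   Context: A polynomial permutes $\mathbb{F}_{q^3}$ if the induced map $\mathbb{F}_{q^3}\to\mathbb{F}_{q^3}$ is a bijection. *)

theory Defs
  imports "HOL-Computational_Algebra.Primes"
begin

end

(* Write q = p^k, Q = p^l, \<lambda>(x) = x^q - x and T for the trace of F_{q^3}/F_q, so that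
   f(x) = \<lambda>(x)^3 + T(c x^Q). Since \<lambda> kills the values of T, \<lambda>(f(x)) = h(\<lambda>(x)) for
   h(y) = \<lambda>(y^3), and f(x + a) = f(x) + a^Q T(c) for a in F_q; hence f permutes F_{q^3} iff
   h is injective on the image of \<lambda> and T(c) \<noteq> 0.
   An element y of trace 0 satisfies y^3 = N(y) - e(y) y, where the norm N(y) and
   e(y) = y y^q + y^q y^{q^2} + y^{q^2} y lie in F_q. If q = 2 (mod 3), cubing is injective and
   no nonzero element of F_q has trace 0, so h(y) = h(z) forces e(y) y = e(z) z and then y = z.
   If 3 divides q, then \<lambda>(\<lambda>(x)) = T(x), which is nonzero for some x, is killed by h; if q = 1 (mod 3),
   then h(w y) = h(y) for a primitive cube root of unity w, which lies in F_q. *)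

theory Submission
  imports
    Defs
    "HOL-Number_Theory.Residues"
    "HOL-Computational_Algebra.Polynomial"
begin

lemma nonzero_power_card_minus_one:
  fixes x :: "'a :: {finite,field}"
  assumes "x \<noteq> 0"
  shows "x ^ (card (UNIV :: 'a set) - 1) = 1"
proof -
  let ?G = "\<lparr>carrier = UNIV - {0 :: 'a}, monoid.mult = (*), one = 1\<rparr>"
  have "comm_group ?G"
  proof (rule comm_groupI)
    show "\<exists>y \<in> carrier ?G. y \<otimes>\<^bsub>?G\<^esub> z = \<one>\<^bsub>?G\<^esub>" if "z \<in> carrier ?G" for z
      using that by (intro bexI[of _ "inverse z"]) auto
  qed auto
  then have "x [^]\<^bsub>?G\<^esub> card (carrier ?G) = \<one>\<^bsub>?G\<^esub>"
    using comm_group.power_order_eq_one[of ?G x] assms by simp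
  moreover have "x [^]\<^bsub>?G\<^esub> n = x ^ n" for n
    by (induction n) (simp_all add: nat_pow_def)
  ultimately show ?thesis by (simp add: card_Diff_singleton)
qed

lemma power_card_eq_self: "(x :: 'a :: {finite,field}) ^ card (UNIV :: 'a set) = x"
proof -
  have "card (UNIV :: 'a set) = Suc (card (UNIV :: 'a set) - 1)"
    using finite_UNIV_card_ge_0[where 'a = 'a] by simp
  then have "x ^ card (UNIV :: 'a set) = x * x ^ (card (UNIV :: 'a set) - 1)"
    by (metis power_Suc)
  then show ?thesis
    using nonzero_power_card_minus_one[of x] by (cases "x = 0") simp_all
qed

lemma card_UNIV_field_ge_2: "2 \<le> card (UNIV :: 'a :: {finite,field} set)"
proof -
  have "card {0, 1 :: 'a} \<le> card (UNIV :: 'a set)"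
    by (rule card_mono) auto
  then show ?thesis by simp
qed

lemma ex_not_poly_root:
  fixes P :: "'a :: {finite,field} poly"
  assumes "P \<noteq> 0" and "degree P < card (UNIV :: 'a set)"
  shows "\<exists>x. poly P x \<noteq> 0"
proof (rule ccontr)
  assume "\<not> ?thesis"
  then have "{x. poly P x = 0} = UNIV" by auto
  with card_poly_roots_bound[OF assms(1)] assms(2) show False by simp
qed

lemma ex_power_neq_self:
  assumes "1 < n" and "n < card (UNIV :: 'a :: {finite,field} set)"
  shows "\<exists>x :: 'a. x ^ n \<noteq> x"
proof -
  let ?P = "monom (1 :: 'a) n - monom 1 1"
  have "coeff ?P n = 1" using assms by simp
  then have "?P \<noteq> 0" by (metis coeff_0 zero_neq_one)
  moreover have "degree ?P \<le> n"
    using assms(1) by (intro degree_diff_le) (auto simp: degree_monom_eq)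
  ultimately obtain x where "poly ?P x \<noteq> 0"
    using ex_not_poly_root assms(2) by (meson le_less_trans)
  then show ?thesis by (auto simp: poly_monom)
qed

lemma cube_eq_cube_imp_eq:
  fixes x y :: "'a :: {finite,field}"
  assumes "card (UNIV :: 'a set) mod 3 = 2" and "x ^ 3 = y ^ 3"
  shows "x = y"
proof (cases "y = 0")
  case False
  define u where "u = x / y"
  have u3: "u ^ 3 = 1" using assms(2) False by (simp add: u_def power_divide)
  have "card (UNIV :: 'a set) - 1 = 3 * ((card (UNIV :: 'a set) - 1) div 3) + 1"
    using assms(1) by presburger
  moreover have "u \<noteq> 0" using u3 by auto
  ultimately have "u ^ (3 * ((card (UNIV :: 'a set) - 1) div 3) + 1) = 1"
    by (metis nonzero_power_card_minus_one)
  then have "u = 1" by (simp add: power_mult u3)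
  with False show ?thesis by (simp add: u_def)
qed (use assms(2) in simp)

lemma ex_primitive_cube_root_of_unity:
  assumes "card (UNIV :: 'a :: {finite,field} set) mod 3 = 1"
  shows "\<exists>w :: 'a. w ^ 3 = 1 \<and> w \<noteq> 1"
proof -
  define m where "m = (card (UNIV :: 'a set) - 1) div 3"
  have card_eq: "card (UNIV :: 'a set) = 3 * m + 1"
    using assms card_UNIV_field_ge_2[where 'a = 'a] unfolding m_def by presburger
  then have "m > 0" using card_UNIV_field_ge_2[where 'a = 'a] by linarith
  then have "\<exists>a :: 'a. a ^ (m + 1) \<noteq> a"
    by (intro ex_power_neq_self) (simp_all add: card_eq)
  then obtain a :: 'a where a: "a ^ (m + 1) \<noteq> a" ..
  then have "a \<noteq> 0" by auto
  then have "(a ^ m) ^ 3 = 1"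
    using nonzero_power_card_minus_one[of a] card_eq by (simp add: power_mult mult.commute)
  moreover have "a ^ m \<noteq> 1" using a by auto
  ultimately show ?thesis by blast
qed

lemma prime_CHAR_finite_field: "prime CHAR('a :: {finite,field})"
  by (rule prime_CHAR_semidom[OF finite_imp_CHAR_pos]) simp

lemma CHAR_eq_if_card_eq_prime_power:
  assumes "prime p" and "card (UNIV :: 'a :: {finite,field} set) = p ^ n"
  shows "CHAR('a) = p"
proof -
  have "CHAR('a) dvd p ^ n" using CHAR_dvd_CARD[where 'a = 'a] assms(2) by simp
  then have "CHAR('a) dvd p" using prime_CHAR_finite_field prime_dvd_power by blast
  then show ?thesis using prime_CHAR_finite_field assms(1) primes_dvd_imp_eq by blast
qed

lemma CHAR_power_diff:
  fixes x y :: "'a :: {finite,field}"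
  shows "(x - y) ^ (CHAR('a) ^ l) = x ^ (CHAR('a) ^ l) - y ^ (CHAR('a) ^ l)"
  using freshmans_dream'[OF prime_CHAR_finite_field, of _ l "x - y" y] by (simp add: eq_diff_eq)

lemma CHAR_power_eq_iff:
  fixes x y :: "'a :: {finite,field}"
  shows "x ^ (CHAR('a) ^ l) = y ^ (CHAR('a) ^ l) \<longleftrightarrow> x = y"
  using CHAR_power_diff[of x y l] by (metis eq_iff_diff_eq_0 power_eq_0_iff)

lemma cube_mod_3: "(n :: nat) ^ 3 mod 3 = n mod 3"
proof -
  have "n ^ 3 mod 3 = (n mod 3) ^ 3 mod 3" by (simp add: power_mod)
  moreover have "n mod 3 = 0 \<or> n mod 3 = 1 \<or> n mod 3 = 2" by presburger
  ultimately show ?thesis by auto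
qed

lemma cube_eq_if_sum_eq_0:
  fixes a b c :: "'a :: comm_ring_1"
  assumes "a + b + c = 0"
  shows "a ^ 3 = a * b * c - (a * b + b * c + c * a) * a"
proof -
  have "a ^ 3 = a * b * c - (a * b + b * c + c * a) * a + a * a * (a + b + c)"
    by (simp add: algebra_simps power3_eq_cube)
  with assms show ?thesis by simp
qed

lemma inj_on_range_if_surj_semiconj:
  assumes "surj f" and "\<And>x. \<phi> (f x) = g (\<phi> x)" and "finite (range \<phi>)"
  shows "inj_on g (range \<phi>)"
proof (rule eq_card_imp_inj_on[OF assms(3)])
  have "g ` range \<phi> = \<phi> ` range f" by (simp add: image_image assms(2))
  also have "\<dots> = range \<phi>" using assms(1) by simp
  finally show "card (g ` range \<phi>) = card (range \<phi>)" by simp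
qed

locale cubic_extension =
  fixes q :: nat
  assumes card_UNIV: "card (UNIV :: 'a :: {finite,field} set) = q ^ 3"
    and q_CHAR_power: "\<exists>k. q = CHAR('a) ^ k"
begin

lemma q_gt_1: "q > 1"
proof (rule ccontr)
  assume "\<not> q > 1"
  then have "q ^ 3 \<le> 1" by (cases q) auto
  with card_UNIV card_UNIV_field_ge_2[where 'a = 'a] show False by simp
qed

lemma q_lt_q2: "q < q\<^sup>2"
  using power_strict_increasing[OF _ q_gt_1, of 1 2] by simp

lemma q2_lt_q3: "q\<^sup>2 < q ^ 3"
  using power_strict_increasing[OF _ q_gt_1, of 2 3] by simp

lemma three_eq_0_iff: "(3 :: 'a) = 0 \<longleftrightarrow> 3 dvd q"
proof -
  obtain k where k: "q = CHAR('a) ^ k" using q_CHAR_power ..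
  with q_gt_1 have "k > 0" by (cases k) auto
  have "(3 :: 'a) = 0 \<longleftrightarrow> CHAR('a) dvd 3"
    using of_nat_eq_0_iff_char_dvd[of 3, where 'a = 'a] by simp
  also have "\<dots> \<longleftrightarrow> CHAR('a) = 3"
    using prime_CHAR_finite_field[where 'a = 'a] by (auto intro: primes_dvd_imp_eq)
  also have "\<dots> \<longleftrightarrow> 3 dvd CHAR('a)"
    using prime_CHAR_finite_field[where 'a = 'a] primes_dvd_imp_eq[of 3 "CHAR('a)"] by auto
  also have "\<dots> \<longleftrightarrow> 3 dvd q"
    using k \<open>k > 0\<close> by (simp add: prime_dvd_power_iff)
  finally show ?thesis .
qed

lemma frob_add: "(x + y :: 'a) ^ q = x ^ q + y ^ q"
  using q_CHAR_power freshmans_dream'[OF prime_CHAR_finite_field] by blast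

lemma frob_diff: "(x - y :: 'a) ^ q = x ^ q - y ^ q"
  using q_CHAR_power CHAR_power_diff by blast

lemma frob_frob: "((x :: 'a) ^ q) ^ q = x ^ q\<^sup>2"
  by (simp add: power_mult [symmetric] power2_eq_square)

lemma frob_frob2: "((x :: 'a) ^ q\<^sup>2) ^ q = x"
  using power_card_eq_self[of x] card_UNIV
  by (simp add: power_mult [symmetric] power2_eq_square power3_eq_cube)

lemma frob_power_fixed: "(a :: 'a) ^ q = a \<Longrightarrow> (a ^ n) ^ q = a ^ n"
  by (metis mult.commute power_mult)

(* The fixed points {a. a ^ q = a} form the subfield F_q; esym2 y is the second elementary
   symmetric function of the conjugates y, y^q, y^(q^2). *)

definition trace :: "'a \<Rightarrow> 'a" where
  "trace x = x ^ q\<^sup>2 + x ^ q + x"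

definition qdiff :: "'a \<Rightarrow> 'a" where
  "qdiff x = x ^ q - x"

definition esym2 :: "'a \<Rightarrow> 'a" where
  "esym2 y = y * y ^ q + y ^ q * y ^ q\<^sup>2 + y ^ q\<^sup>2 * y"

definition field_norm :: "'a \<Rightarrow> 'a" where
  "field_norm y = y * y ^ q * y ^ q\<^sup>2"

lemma trace_0: "trace 0 = 0"
  using q_gt_1 by (simp add: trace_def zero_power)

lemma qdiff_0: "qdiff 0 = 0"
  using q_gt_1 by (simp add: qdiff_def)

lemma qdiff_eq_0_iff: "qdiff x = 0 \<longleftrightarrow> x ^ q = x"
  by (simp add: qdiff_def)

lemma qdiff_add: "qdiff (x + y) = qdiff x + qdiff y"
  by (simp add: qdiff_def frob_add)

lemma qdiff_diff: "qdiff (x - y) = qdiff x - qdiff y"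
  by (simp add: qdiff_def frob_diff)

lemma qdiff_mult_fixed: "a ^ q = a \<Longrightarrow> qdiff (a * x) = a * qdiff x"
  by (simp add: qdiff_def power_mult_distrib right_diff_distrib)

lemma trace_frob: "trace x ^ q = trace x"
  by (simp add: trace_def frob_add frob_frob frob_frob2)

lemma qdiff_trace: "qdiff (trace x) = 0"
  by (simp add: qdiff_eq_0_iff trace_frob)

lemma trace_qdiff: "trace (qdiff x) = 0"
proof -
  have "(x ^ q - x) ^ q\<^sup>2 = x - x ^ q\<^sup>2"
    by (metis frob_frob frob_diff frob_frob2)
  then show ?thesis by (simp add: trace_def qdiff_def frob_diff frob_frob)
qed

lemma trace_add: "trace (x + y) = trace x + trace y"
  by (simp add: trace_def frob_add frob_frob [symmetric])

lemma trace_diff: "trace (x - y) = trace x - trace y"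
  by (simp add: trace_def frob_diff frob_frob [symmetric])

lemma trace_mult_fixed: "a ^ q = a \<Longrightarrow> trace (a * x) = a * trace x"
  by (simp add: trace_def power_mult_distrib distrib_left frob_frob [symmetric])

lemma trace_fixed: "a ^ q = a \<Longrightarrow> trace a = 3 * a"
  by (simp add: trace_def frob_frob [symmetric])

lemma fixed_trace_0_imp_0:
  assumes "\<not> 3 dvd q" and "a ^ q = a" and "trace a = 0"
  shows "a = 0"
  using assms three_eq_0_iff trace_fixed by simp

lemma esym2_frob: "esym2 y ^ q = esym2 y"
  by (simp add: esym2_def frob_add power_mult_distrib frob_frob frob_frob2 algebra_simps)

lemma field_norm_frob: "field_norm y ^ q = field_norm y"
  by (simp add: field_norm_def power_mult_distrib frob_frob frob_frob2 algebra_simps)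

lemma esym2_mult_fixed: "a ^ q = a \<Longrightarrow> esym2 (a * y) = a\<^sup>2 * esym2 y"
proof -
  assume "a ^ q = a"
  then have "a ^ q\<^sup>2 = a" by (metis frob_frob)
  with \<open>a ^ q = a\<close> show ?thesis
    by (simp add: esym2_def power_mult_distrib power2_eq_square algebra_simps)
qed

lemma cube_trace_0:
  assumes "trace y = 0"
  shows "y ^ 3 = field_norm y - esym2 y * y"
proof -
  have "y + y ^ q + y ^ q\<^sup>2 = 0" using assms by (simp add: trace_def add_ac)
  from cube_eq_if_sum_eq_0[OF this] show ?thesis
    by (simp add: field_norm_def esym2_def algebra_simps)
qed

lemma cube_eq_cube_imp_eq_mod_3:
  "q mod 3 = 2 \<Longrightarrow> (x :: 'a) ^ 3 = y ^ 3 \<Longrightarrow> x = y"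
  using cube_eq_cube_imp_eq card_UNIV cube_mod_3 by metis

lemma trace_0_cube_fixed_imp_0:
  assumes "q mod 3 = 2" and "trace y = 0" and "(y ^ 3) ^ q = y ^ 3"
  shows "y = 0"
proof -
  have "(y ^ q) ^ 3 = y ^ 3" using assms(3) by (metis power_mult mult.commute)
  then have "y ^ q = y" using assms(1) cube_eq_cube_imp_eq_mod_3 by blast
  moreover have "\<not> 3 dvd q" using assms(1) by presburger
  ultimately show ?thesis using assms(2) fixed_trace_0_imp_0 by simp
qed

lemma trace_0_esym2_0_imp_0:
  assumes "q mod 3 = 2" and "trace y = 0" and "esym2 y = 0"
  shows "y = 0"
  using assms trace_0_cube_fixed_imp_0 cube_trace_0 field_norm_frob by simp

lemma esym2_mult_eq_if_cube_qdiff_eq: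
  assumes "q mod 3 = 2" and "trace y = 0" and "trace z = 0"
    and "qdiff (y ^ 3) = qdiff (z ^ 3)"
  shows "esym2 y * y = esym2 z * z"
proof -
  define d where "d = esym2 z * z - esym2 y * y"
  have "d = (y ^ 3 - z ^ 3) - (field_norm y - field_norm z)"
    using cube_trace_0 assms(2,3) by (simp add: d_def)
  then have "qdiff d = 0"
    using assms(4) field_norm_frob by (simp add: qdiff_diff qdiff_eq_0_iff [symmetric])
  moreover have "trace d = 0"
    using assms(2,3) by (simp add: d_def trace_diff trace_mult_fixed esym2_frob)
  moreover have "\<not> 3 dvd q" using assms(1) by presburger
  ultimately have "d = 0" using fixed_trace_0_imp_0 by (simp add: qdiff_eq_0_iff)
  then show ?thesis by (simp add: d_def)
qed

lemma inj_on_cube_qdiff: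
  assumes "q mod 3 = 2"
  shows "inj_on (\<lambda>y. qdiff (y ^ 3)) {y. trace y = 0}"
proof (rule inj_onI)
  fix y z
  assume "y \<in> {y. trace y = 0}" and "z \<in> {y. trace y = 0}"
  then have y: "trace y = 0" and z: "trace z = 0" by simp_all
  assume "qdiff (y ^ 3) = qdiff (z ^ 3)"
  then have eq: "esym2 y * y = esym2 z * z"
    by (rule esym2_mult_eq_if_cube_qdiff_eq[OF assms y z])
  have zero: "w = 0" if "trace w = 0" and "esym2 w * w = 0" for w
    using that assms trace_0_esym2_0_imp_0 by auto
  show "y = z"
  proof (cases "y = 0 \<or> z = 0")
    case True
    then show ?thesis using eq zero y z by auto
  next
    case False
    then have sy: "esym2 y \<noteq> 0" and sz: "esym2 z \<noteq> 0"
      using assms y z trace_0_esym2_0_imp_0 by blast+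
    define r where "r = esym2 z / esym2 y"
    have r_fixed: "r ^ q = r" by (simp add: r_def power_divide esym2_frob)
    have y_eq: "y = r * z" using eq sy by (simp add: r_def field_simps)
    have "r ^ 3 * (esym2 z * z) = esym2 y * y"
      using esym2_mult_fixed[OF r_fixed, of z] by (simp add: y_eq power2_eq_square power3_eq_cube)
    with eq False sz have "r ^ 3 = 1 ^ 3" by simp
    then have "r = 1" using assms cube_eq_cube_imp_eq_mod_3 by blast
    then show ?thesis using y_eq by simp
  qed
qed

lemma ex_trace_neq_0: "\<exists>x. trace x \<noteq> 0"
proof -
  let ?P = "monom (1 :: 'a) (q\<^sup>2) + monom 1 q + monom 1 1"
  have "coeff ?P (q\<^sup>2) = 1" using q_lt_q2 q_gt_1 by simp
  then have "?P \<noteq> 0" by (metis coeff_0 zero_neq_one)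
  moreover have "degree ?P < card (UNIV :: 'a set)"
    using q_lt_q2 q2_lt_q3 q_gt_1 card_UNIV
    by (intro le_less_trans[OF degree_add_le[OF degree_add_le]]) (auto simp: degree_monom_eq)
  ultimately obtain x where "poly ?P x \<noteq> 0"
    using ex_not_poly_root by blast
  then show ?thesis by (auto simp: poly_monom trace_def)
qed

lemma not_inj_on_cube_qdiff_if_3_dvd:
  assumes "3 dvd q"
  shows "\<not> inj_on (\<lambda>y. qdiff (y ^ 3)) (range qdiff)"
proof
  assume inj: "inj_on (\<lambda>y. qdiff (y ^ 3)) (range qdiff)"
  obtain x where x: "trace x \<noteq> 0" using ex_trace_neq_0 ..
  have "qdiff (qdiff x) = trace x - 3 * x ^ q"
    by (simp add: qdiff_def trace_def frob_diff frob_frob algebra_simps)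
  then have "trace x \<in> range qdiff"
    using assms three_eq_0_iff by (metis diff_zero mult_zero_left rangeI)
  moreover have "0 \<in> range qdiff" by (metis qdiff_trace rangeI)
  moreover have "qdiff (trace x ^ 3) = 0"
    by (simp add: qdiff_eq_0_iff frob_power_fixed trace_frob)
  moreover have "qdiff (0 ^ 3) = 0" by (simp add: qdiff_0)
  ultimately have "trace x = 0" using inj by (metis inj_onD)
  with x show False ..
qed

lemma not_inj_on_cube_qdiff_if_mod_3_eq_1:
  assumes "q mod 3 = 1"
  shows "\<not> inj_on (\<lambda>y. qdiff (y ^ 3)) (range qdiff)"
proof
  assume inj: "inj_on (\<lambda>y. qdiff (y ^ 3)) (range qdiff)"
  obtain w :: 'a where w: "w ^ 3 = 1" "w \<noteq> 1"
    using ex_primitive_cube_root_of_unity assms card_UNIV cube_mod_3 by metis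
  have "w ^ q = (w ^ 3) ^ (q div 3) * w"
    using assms by (metis mult.commute power_Suc2 power_mult mod_mult_div_eq add.commute plus_1_eq_Suc)
  then have w_fixed: "w ^ q = w" using w by simp
  obtain x :: 'a where "x ^ q \<noteq> x"
    using ex_power_neq_self q_gt_1 q_lt_q2 q2_lt_q3 card_UNIV by (metis less_trans)
  then have y: "qdiff x \<noteq> 0" by (simp add: qdiff_eq_0_iff)
  have "w * qdiff x \<in> range qdiff" by (metis qdiff_mult_fixed[OF w_fixed] rangeI)
  moreover have "qdiff x \<in> range qdiff" by simp
  moreover have "qdiff ((w * qdiff x) ^ 3) = qdiff (qdiff x ^ 3)"
    by (simp add: power_mult_distrib w)
  ultimately have "w * qdiff x = qdiff x" using inj by (metis inj_onD)
  with y w show False by simp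
qed

lemma inj_on_cube_qdiff_iff: "inj_on (\<lambda>y. qdiff (y ^ 3)) (range qdiff) \<longleftrightarrow> q mod 3 = 2"
proof
  assume inj: "inj_on (\<lambda>y. qdiff (y ^ 3)) (range qdiff)"
  have "\<not> 3 dvd q" and "q mod 3 \<noteq> 1"
    using not_inj_on_cube_qdiff_if_3_dvd not_inj_on_cube_qdiff_if_mod_3_eq_1 inj by blast+
  then show "q mod 3 = 2" by presburger
next
  assume "q mod 3 = 2"
  moreover have "range qdiff \<subseteq> {y. trace y = 0}" by (auto simp: trace_qdiff)
  ultimately show "inj_on (\<lambda>y. qdiff (y ^ 3)) (range qdiff)"
    using inj_on_cube_qdiff inj_on_subset by blast
qed

lemma bij_qdiff_cube_plus_trace_iff:
  assumes L_add: "\<And>x y. L (x + y) = L x + L y"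
  shows "bij (\<lambda>x. qdiff x ^ 3 + trace (L x)) \<longleftrightarrow>
    inj_on (\<lambda>y. qdiff (y ^ 3)) (range qdiff) \<and> inj_on (\<lambda>a. trace (L a)) {a. a ^ q = a}"
    (is "bij ?f \<longleftrightarrow> inj_on ?h _ \<and> inj_on ?g _")
proof -
  have L_0: "L 0 = 0" using L_add[of 0 0] by (metis add_cancel_right_right add.right_neutral)
  have semiconj: "qdiff (?f x) = ?h (qdiff x)" for x
    by (simp add: qdiff_add qdiff_trace)
  have shift: "?f (x + a) = ?f x + ?g a" if "a ^ q = a" for x a
    using that by (simp add: qdiff_add qdiff_eq_0_iff [symmetric] L_add trace_add)
  have on_fixed: "?f a = ?g a" if "a ^ q = a" for a
    using that q_gt_1 by (simp add: qdiff_eq_0_iff [symmetric])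
  show ?thesis
  proof
    assume "bij ?f"
    then have "inj ?f" and "surj ?f" by (simp_all add: bij_is_inj bij_is_surj)
    have "inj_on ?h (range qdiff)"
      using inj_on_range_if_surj_semiconj[of ?f qdiff ?h] \<open>surj ?f\<close> semiconj by simp
    moreover have "inj_on ?g {a. a ^ q = a}"
    proof -
      have "inj_on ?f {a. a ^ q = a}"
        using \<open>inj ?f\<close> by (rule inj_on_subset) simp
      moreover have "inj_on ?f {a. a ^ q = a} \<longleftrightarrow> inj_on ?g {a. a ^ q = a}"
        by (rule inj_on_cong) (simp add: on_fixed)
      ultimately show ?thesis by simp
    qed
    ultimately show "inj_on ?h (range qdiff) \<and> inj_on ?g {a. a ^ q = a}" ..
  next
    assume inj: "inj_on ?h (range qdiff) \<and> inj_on ?g {a. a ^ q = a}"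
    have "inj ?f"
    proof (rule injI)
      fix x y
      assume eq: "?f x = ?f y"
      then have "?h (qdiff x) = ?h (qdiff y)" using semiconj by metis
      then have "qdiff x = qdiff y" using inj by (auto dest: inj_onD)
      then have a_fixed: "(y - x) ^ q = y - x" by (metis qdiff_diff qdiff_eq_0_iff diff_self)
      have "?f y = ?f x + ?g (y - x)" using shift[OF a_fixed, of x] by simp
      with eq have "?g (y - x) = ?g 0" by (simp add: L_0 trace_0)
      then have "y - x = 0" using inj a_fixed q_gt_1 by (auto dest: inj_onD)
      then show "x = y" by simp
    qed
    then show "bij ?f" by (simp add: bij_def finite_UNIV_inj_surj)
  qed
qed

lemma inj_on_trace_mult_CHAR_power_iff:
  "inj_on (\<lambda>a. trace (c * a ^ (CHAR('a) ^ l))) {a. a ^ q = a} \<longleftrightarrow> trace c \<noteq> 0"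
proof -
  have trace_eq: "trace (c * a ^ (CHAR('a) ^ l)) = a ^ (CHAR('a) ^ l) * trace c" if "a ^ q = a" for a
    using trace_mult_fixed[OF frob_power_fixed[OF that]] by (simp add: mult.commute)
  show ?thesis
  proof
    assume inj: "inj_on (\<lambda>a. trace (c * a ^ (CHAR('a) ^ l))) {a. a ^ q = a}"
    show "trace c \<noteq> 0"
    proof
      assume "trace c = 0"
      then have "trace (c * 0 ^ (CHAR('a) ^ l)) = trace (c * 1 ^ (CHAR('a) ^ l))"
        using trace_eq[of 0] trace_eq[of 1] q_gt_1 by simp
      then have "(0 :: 'a) = 1" by (rule inj_onD[OF inj]) (use q_gt_1 in simp_all)
      then show False by simp
    qed
  next
    assume "trace c \<noteq> 0"
    then show "inj_on (\<lambda>a. trace (c * a ^ (CHAR('a) ^ l))) {a. a ^ q = a}"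
      by (auto intro!: inj_onI simp: trace_eq CHAR_power_eq_iff)
  qed
qed

end

theorem theorem1p8:
  fixes c :: "'a::{finite,field}" and p k l :: nat
  assumes "prime p" and "k > 0" and "card (UNIV :: 'a set) = p ^ (3 * k)"
  shows "bij (\<lambda>x::'a. (x ^ (p ^ k) - x) ^ 3
                 + c ^ ((p ^ k) ^ 2) * x ^ ((p ^ k) ^ 2 * p ^ l)
                 + c ^ (p ^ k) * x ^ (p ^ k * p ^ l)
                 + c * x ^ (p ^ l))
         \<longleftrightarrow> (p ^ k mod 3 = 2 \<and> c ^ ((p ^ k) ^ 2) + c ^ (p ^ k) + c \<noteq> 0)"
proof -
  have char: "CHAR('a) = p"
    using assms(1,3) by (rule CHAR_eq_if_card_eq_prime_power)
  interpret cubic_extension "p ^ k"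
    using assms(3) char by unfold_locales (auto simp: power_mult mult.commute)
  have f_eq: "(\<lambda>x::'a. (x ^ (p ^ k) - x) ^ 3
                 + c ^ ((p ^ k) ^ 2) * x ^ ((p ^ k) ^ 2 * p ^ l)
                 + c ^ (p ^ k) * x ^ (p ^ k * p ^ l)
                 + c * x ^ (p ^ l))
      = (\<lambda>x. qdiff x ^ 3 + trace (c * x ^ (CHAR('a) ^ l)))"
    by (simp add: fun_eq_iff char qdiff_def trace_def power_mult_distrib power_mult [symmetric]
        mult.commute add.assoc)
  have "c * (x + y) ^ (CHAR('a) ^ l) = c * x ^ (CHAR('a) ^ l) + c * y ^ (CHAR('a) ^ l)" for x y
    by (simp add: freshmans_dream'[OF prime_CHAR_finite_field] distrib_left)
  then have "bij (\<lambda>x. qdiff x ^ 3 + trace (c * x ^ (CHAR('a) ^ l))) \<longleftrightarrow> p ^ k mod 3 = 2 \<and> trace c \<noteq> 0"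
    by (simp add: bij_qdiff_cube_plus_trace_iff inj_on_cube_qdiff_iff inj_on_trace_mult_CHAR_power_iff)
  then show ?thesis by (simp add: f_eq trace_def)
qed

end
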